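(* In the standing setting, for every $a'\in P'$ we have $g'(\downarrow\{a'\})=\downarrow f^{-1}(a')$, where $\downarrow\{a'\}=\{b'\in P': b'\preceq' a'\}\in Q'$ and $\downarrow f^{-1}(a')=\{b\in P:\ \exists a\in f^{-1}(a') \text{ with } b\preceq a\}$.
   Context: Standing setting: $(P,\preceq)$ is a finite poset with a bottom and a top element; $f:P\to P'$ is a surjective map onto $P'=f(P)$; $f^{-1}(a')=\{a\in P: f(a)=a'\}$; the relation $\preceq'$ on $P'$ is defined by $b'\preceq' a'$ iff there exist $a\in f^{-1}(a')$, $b\in f^{-1}(b')$ with $b\preceq a$. Assume the three conditions: (D) for all $a',b'\in P'$ with $b'\preceq' a'$ and every $a\in f^{-1}(a')$ there is $b\in f^{-1}(b')$ with $b\preceq a$; (U) for all $a',b'\in P'$ with $b'\preceq' a'$ and every $b\in f^{-1}(b')$ there is $a\in f^{-1}(a')$ with $b\preceq a$; (S) for all $a,b,c\in P$, if $c\preceq b\preceq a$ and $f(c)=f(a)$ then $f(b)=f(a)$. (Then $(P',\preceq')$ is a poset.) A down-set of a poset is a subset $A$ such that $a\in A$ and $b\preceq a$ imply $b\in A$. $Q$ is the set of nonempty down-sets of $(P,\preceq)$ and $Q'$ the set of nonempty down-sets of $(P',\preceq')$, each ordered by inclusion. $g:2^P\to 2^{P'}$ is $g(A)=\{f(a):a\in A\}$. For $A'\in Q'$, $g^{-1}(A')=\{A\in Q: g(A)=A'\}$ and $g'(A')=\bigcup_{A\in g^{-1}(A')}A$. *)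

theory Defs
  imports Main
begin

definition poset_on :: "'a set \<Rightarrow> ('a \<Rightarrow> 'a \<Rightarrow> bool) \<Rightarrow> bool" where
  "poset_on P le \<longleftrightarrow>
     (\<forall>a\<in>P. le a a) \<and>
     (\<forall>a\<in>P. \<forall>b\<in>P. le a b \<and> le b a \<longrightarrow> a = b) \<and>
     (\<forall>a\<in>P. \<forall>b\<in>P. \<forall>c\<in>P. le a b \<and> le b c \<longrightarrow> le a c)"

text \<open>The induced relation on P' = f ` P: quot_le P le f b' a' means b' is below a'.\<close>

definition quot_le :: "'a set \<Rightarrow> ('a \<Rightarrow> 'a \<Rightarrow> bool) \<Rightarrow> ('a \<Rightarrow> 'b) \<Rightarrow> 'b \<Rightarrow> 'b \<Rightarrow> bool" where
  "quot_le P le f b' a' \<longleftrightarrow> (\<exists>a\<in>P. \<exists>b\<in>P. f a = a' \<and> f b = b' \<and> le b a)"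

definition down_set :: "'a set \<Rightarrow> ('a \<Rightarrow> 'a \<Rightarrow> bool) \<Rightarrow> 'a set \<Rightarrow> bool" where
  "down_set P le A \<longleftrightarrow> A \<subseteq> P \<and> (\<forall>a\<in>A. \<forall>b\<in>P. le b a \<longrightarrow> b \<in> A)"

definition Qsets :: "'a set \<Rightarrow> ('a \<Rightarrow> 'a \<Rightarrow> bool) \<Rightarrow> 'a set set" where
  "Qsets P le = {A. down_set P le A \<and> A \<noteq> {}}"

definition gmap :: "('a \<Rightarrow> 'b) \<Rightarrow> 'a set \<Rightarrow> 'b set" where
  "gmap f A = f ` A"

definition ginv :: "'a set \<Rightarrow> ('a \<Rightarrow> 'a \<Rightarrow> bool) \<Rightarrow> ('a \<Rightarrow> 'b) \<Rightarrow> 'b set \<Rightarrow> 'a set set" where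
  "ginv P le f A' = {A \<in> Qsets P le. gmap f A = A'}"

definition gprime :: "'a set \<Rightarrow> ('a \<Rightarrow> 'a \<Rightarrow> bool) \<Rightarrow> ('a \<Rightarrow> 'b) \<Rightarrow> 'b set \<Rightarrow> 'a set" where
  "gprime P le f A' = \<Union> (ginv P le f A')"

end

theory Submission
  imports Defs
begin

text \<open>Let L be the down-closure of the fibre of a'. Condition (D) lifts every element below a'
  to an element below a fixed preimage of a', so g(L) is the principal down-set of a'. Condition (U)
  lifts every element of a down-set A with g(A) below a' to an element below the fibre, so A is
  contained in L. Thus L is the largest down-set mapped onto the principal down-set, and the
  union g' of all of them is L.\<close>

definition down_closure :: "'a set \<Rightarrow> ('a \<Rightarrow> 'a \<Rightarrow> bool) \<Rightarrow> 'a set \<Rightarrow> 'a set" where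
  "down_closure P le X = {b \<in> P. \<exists>a\<in>X. le b a}"

lemma down_closure_in_Qsets:
  assumes "poset_on P le" and "X \<subseteq> P" and "X \<noteq> {}"
  shows "down_closure P le X \<in> Qsets P le"
proof -
  have "\<And>x. x \<in> P \<Longrightarrow> le x x"
    and "\<And>x y z. x \<in> P \<Longrightarrow> y \<in> P \<Longrightarrow> z \<in> P \<Longrightarrow> le x y \<Longrightarrow> le y z \<Longrightarrow> le x z"
    using assms(1) unfolding poset_on_def by blast+
  then show ?thesis
    using assms(2,3) unfolding Qsets_def down_set_def down_closure_def by blast
qed

lemma gprime_eq_greatest:
  assumes "L \<in> ginv P le f A'" and "\<And>A. A \<in> ginv P le f A' \<Longrightarrow> A \<subseteq> L"
  shows "gprime P le f A' = L"
  using assms unfolding gprime_def by blast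

locale quotient_poset =
  fixes P :: "'a set" and le :: "'a \<Rightarrow> 'a \<Rightarrow> bool" and f :: "'a \<Rightarrow> 'b"
  assumes poset: "poset_on P le"
    and lift_down: "\<And>a' b' a. a' \<in> f ` P \<Longrightarrow> b' \<in> f ` P \<Longrightarrow> quot_le P le f b' a' \<Longrightarrow>
              a \<in> P \<Longrightarrow> f a = a' \<Longrightarrow> \<exists>b\<in>P. f b = b' \<and> le b a"
    and lift_up: "\<And>a' b' b. a' \<in> f ` P \<Longrightarrow> b' \<in> f ` P \<Longrightarrow> quot_le P le f b' a' \<Longrightarrow>
              b \<in> P \<Longrightarrow> f b = b' \<Longrightarrow> \<exists>a\<in>P. f a = a' \<and> le b a"
begin

lemma poset_refl: "a \<in> P \<Longrightarrow> le a a"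
  using poset unfolding poset_on_def by blast

lemma poset_trans: "a \<in> P \<Longrightarrow> b \<in> P \<Longrightarrow> c \<in> P \<Longrightarrow> le a b \<Longrightarrow> le b c \<Longrightarrow> le a c"
  using poset unfolding poset_on_def by blast

abbreviation fibre :: "'b \<Rightarrow> 'a set" where
  "fibre a' \<equiv> {a \<in> P. f a = a'}"

lemma quot_le_refl: "a' \<in> f ` P \<Longrightarrow> quot_le P le f a' a'"
  unfolding quot_le_def using poset_refl by blast

lemma quot_le_trans:
  assumes "c' \<in> f ` P" and "b' \<in> f ` P" and "a' \<in> f ` P"
    and "quot_le P le f c' b'" and "quot_le P le f b' a'"
  shows "quot_le P le f c' a'"
proof -
  obtain c where c: "c \<in> P" "f c = c'" using assms(1) by blast
  obtain b where b: "b \<in> P" "f b = b'" "le c b" using lift_up[OF assms(2,1,4) c] by blast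
  obtain a where a: "a \<in> P" "f a = a'" "le b a" using lift_up[OF assms(3,2,5) b(1,2)] by blast
  show ?thesis unfolding quot_le_def using a b c poset_trans by blast
qed

lemma principal_down_set_in_Qsets:
  assumes "a' \<in> f ` P"
  shows "down_closure (f ` P) (quot_le P le f) {a'} \<in> Qsets (f ` P) (quot_le P le f)"
proof -
  have "a' \<in> down_closure (f ` P) (quot_le P le f) {a'}"
    using assms quot_le_refl unfolding down_closure_def by blast
  moreover have "c' \<in> down_closure (f ` P) (quot_le P le f) {a'}"
    if "b' \<in> down_closure (f ` P) (quot_le P le f) {a'}" "c' \<in> f ` P" "quot_le P le f c' b'" for b' c'
    using that assms quot_le_trans[of c' b' a'] unfolding down_closure_def by blast
  ultimately show ?thesis
    unfolding Qsets_def down_set_def down_closure_def by blast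
qed

lemma gmap_down_closure_fibre:
  assumes "a' \<in> f ` P"
  shows "gmap f (down_closure P le (fibre a')) = down_closure (f ` P) (quot_le P le f) {a'}"
proof
  show "gmap f (down_closure P le (fibre a')) \<subseteq> down_closure (f ` P) (quot_le P le f) {a'}"
    unfolding gmap_def down_closure_def quot_le_def by blast
next
  obtain a where a: "a \<in> P" "f a = a'" using assms by blast
  show "down_closure (f ` P) (quot_le P le f) {a'} \<subseteq> gmap f (down_closure P le (fibre a'))"
  proof
    fix b' assume "b' \<in> down_closure (f ` P) (quot_le P le f) {a'}"
    then have "b' \<in> f ` P" "quot_le P le f b' a'" unfolding down_closure_def by auto
    then obtain b where "b \<in> P" "f b = b'" "le b a" using lift_down[OF assms _ _ a] by blast
    then show "b' \<in> gmap f (down_closure P le (fibre a'))"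
      unfolding gmap_def down_closure_def using a by blast
  qed
qed

lemma ginv_principal_subset_down_closure_fibre:
  assumes "a' \<in> f ` P" and "A \<in> ginv P le f (down_closure (f ` P) (quot_le P le f) {a'})"
  shows "A \<subseteq> down_closure P le (fibre a')"
proof
  fix x assume "x \<in> A"
  with assms(2) have "x \<in> P" and "f x \<in> down_closure (f ` P) (quot_le P le f) {a'}"
    unfolding ginv_def Qsets_def down_set_def gmap_def by blast+
  then have "f x \<in> f ` P" "quot_le P le f (f x) a'" unfolding down_closure_def by auto
  then obtain a where "a \<in> P" "f a = a'" "le x a" using lift_up[OF assms(1) _ _ \<open>x \<in> P\<close>] by blast
  with \<open>x \<in> P\<close> show "x \<in> down_closure P le (fibre a')" unfolding down_closure_def by blast
qed

lemma gprime_principal_down_set: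
  assumes "a' \<in> f ` P"
  shows "gprime P le f (down_closure (f ` P) (quot_le P le f) {a'}) = down_closure P le (fibre a')"
proof (rule gprime_eq_greatest)
  have "down_closure P le (fibre a') \<in> Qsets P le"
    using assms by (intro down_closure_in_Qsets[OF poset]) auto
  with gmap_down_closure_fibre[OF assms]
  show "down_closure P le (fibre a') \<in> ginv P le f (down_closure (f ` P) (quot_le P le f) {a'})"
    unfolding ginv_def by simp
qed (rule ginv_principal_subset_down_closure_fibre[OF assms])

end

theorem lemma12:
  fixes P :: "'a set" and le :: "'a \<Rightarrow> 'a \<Rightarrow> bool" and f :: "'a \<Rightarrow> 'b" and a' :: 'b
  assumes fin: "finite P"
    and po: "poset_on P le"
    and bot: "\<exists>z\<in>P. \<forall>x\<in>P. le z x"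
    and top: "\<exists>t\<in>P. \<forall>x\<in>P. le x t"
    and D: "\<And>a' b' a. a' \<in> f ` P \<Longrightarrow> b' \<in> f ` P \<Longrightarrow> quot_le P le f b' a' \<Longrightarrow>
              a \<in> P \<Longrightarrow> f a = a' \<Longrightarrow> \<exists>b\<in>P. f b = b' \<and> le b a"
    and U: "\<And>a' b' b. a' \<in> f ` P \<Longrightarrow> b' \<in> f ` P \<Longrightarrow> quot_le P le f b' a' \<Longrightarrow>
              b \<in> P \<Longrightarrow> f b = b' \<Longrightarrow> \<exists>a\<in>P. f a = a' \<and> le b a"
    and S: "\<And>a b c. a \<in> P \<Longrightarrow> b \<in> P \<Longrightarrow> c \<in> P \<Longrightarrow> le c b \<Longrightarrow> le b a \<Longrightarrow>
              f c = f a \<Longrightarrow> f b = f a"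
    and a'P: "a' \<in> f ` P"
  shows "{b' \<in> f ` P. quot_le P le f b' a'} \<in> Qsets (f ` P) (quot_le P le f)
     \<and> gprime P le f {b' \<in> f ` P. quot_le P le f b' a'}
         = {b \<in> P. \<exists>a\<in>P. f a = a' \<and> le b a}"
proof -
  interpret quotient_poset P le f
    using po D U by unfold_locales
  have principal: "{b' \<in> f ` P. quot_le P le f b' a'} = down_closure (f ` P) (quot_le P le f) {a'}"
    and fibre: "{b \<in> P. \<exists>a\<in>P. f a = a' \<and> le b a} = down_closure P le (fibre a')"
    unfolding down_closure_def by auto
  show ?thesis
    unfolding principal fibre
    using principal_down_set_in_Qsets[OF a'P] gprime_principal_down_set[OF a'P] by blast
qed

end
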